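(* In the setting described in the context, suppose there exists $\mathbf{w}\in S_m$ with $f(\mathbf{w})>0$. Then for any $\mathbf{w}_0=(w_1',\ldots,w_m')^T\in S_m$ with $0<w_i'<1$ for each $i$, $f(\mathbf{w}_0)>0$.
   Context: Given a model matrix $\mathbf{X}\in\mathbb{R}^{m\times p}$ (rows $\mathbf{q}(\mathbf{x}_i)^T$ for distinct design points under a generalized linear model, $m\ge2$, $p\ge2$) and numbers $\nu_1,\ldots,\nu_m\ge0$ (where $\nu_i=(\partial\mu_i/\partial\eta_i)^2/\mathrm{Var}(Y_i)$), let $S_m=\{\mathbf{w}\in\mathbb{R}^m:w_i\ge0,\sum_iw_i=1\}$, and for $\mathbf{w}\in S_m$ let $\mathbf{W}=\mathrm{diag}\{w_1\nu_1,\ldots,w_m\nu_m\}$ and $f(\mathbf{w})=|\mathbf{X}^T\mathbf{W}\mathbf{X}|$. *)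

theory Defs
  imports "HOL-Analysis.Analysis"
begin

definition prob_simplex :: "(real ^ 'm) set" where
  "prob_simplex = {w. (\<forall>i. 0 \<le> w $ i) \<and> (\<Sum>i\<in>UNIV. w $ i) = 1}"

definition weight_mat :: "real ^ 'm \<Rightarrow> real ^ 'm \<Rightarrow> real ^ 'm ^ 'm" where
  "weight_mat nu w = (\<chi> i j. if i = j then w $ i * nu $ i else 0)"

definition fdet :: "real ^ 'p ^ 'm \<Rightarrow> real ^ 'm \<Rightarrow> real ^ 'm \<Rightarrow> real" where
  "fdet X nu w = det (transpose X ** weight_mat nu w ** X)"

end

theory Submission
  imports Defs
begin

(* The quadratic form of X^T W X is x \<mapsto> \<Sum>k. w_k \<nu>_k ((X x)_k)^2, so x lies in its kernel iff
   (X x)_k = 0 wherever w_k \<nu>_k > 0. Hence f(w) \<noteq> 0 persists when the support of w grows.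
   On the segment from w to w0 every point other than w has full support, so f does not vanish
   there, and by continuity it keeps the sign of f(w) > 0 up to w0. *)

lemma weight_mat_mult_vec: "weight_mat nu w *v y = (\<chi> k. w $ k * nu $ k * y $ k)"
proof -
  have "(\<Sum>j\<in>UNIV. (if i = j then w $ i * nu $ i else 0) * y $ j) = w $ i * nu $ i * y $ i" for i
    by (simp add: if_distrib[of "\<lambda>a. a * _"] cong: if_cong)
  then show ?thesis
    by (simp add: weight_mat_def matrix_vector_mult_def vec_eq_iff)
qed

lemma weighted_gram_mult_vec:
  "(transpose X ** weight_mat nu w ** X) *v x = transpose X *v (weight_mat nu w *v (X *v x))"
  by (simp add: matrix_vector_mul_assoc matrix_mul_assoc)

lemma weighted_gram_quadratic_form:
  "x \<bullet> ((transpose X ** weight_mat nu w ** X) *v x) = (\<Sum>k\<in>UNIV. w $ k * nu $ k * ((X *v x) $ k)\<^sup>2)"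
proof -
  have "x \<bullet> (transpose X *v z) = (X *v x) \<bullet> z" for z
    by (metis dot_lmul_matrix vector_transpose_matrix)
  then show ?thesis
    by (simp add: weighted_gram_mult_vec weight_mat_mult_vec inner_vec_def power2_eq_square mult_ac)
qed

lemma det_nonzero_iff_trivial_kernel:
  fixes A :: "'a::field ^ 'n ^ 'n"
  shows "det A \<noteq> 0 \<longleftrightarrow> (\<forall>x. A *v x = 0 \<longrightarrow> x = 0)"
  by (simp add: invertible_det_nz [symmetric] invertible_left_inverse matrix_left_invertible_ker)

lemma fdet_nonzero_if_support_subset:
  assumes nu: "\<forall>i. 0 \<le> nu $ i" and v: "\<forall>i. 0 \<le> v $ i"
    and support: "\<forall>k. v $ k = 0 \<longrightarrow> w $ k = 0"
    and nonzero: "fdet X nu w \<noteq> 0"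
  shows "fdet X nu v \<noteq> 0"
proof
  assume "fdet X nu v = 0"
  then have "\<not> (\<forall>x. (transpose X ** weight_mat nu v ** X) *v x = 0 \<longrightarrow> x = 0)"
    unfolding fdet_def by (simp only: det_nonzero_iff_trivial_kernel [symmetric] not_not)
  then obtain x where "x \<noteq> 0" and kernel_v: "(transpose X ** weight_mat nu v ** X) *v x = 0"
    by blast
  define y where "y = X *v x"
  have "(\<Sum>k\<in>UNIV. v $ k * nu $ k * (y $ k)\<^sup>2) = 0"
    using weighted_gram_quadratic_form[of x X nu v] kernel_v by (simp add: y_def)
  moreover have "0 \<le> v $ k * nu $ k * (y $ k)\<^sup>2" for k
    using nu v by simp
  ultimately have "v $ k * nu $ k * (y $ k)\<^sup>2 = 0" for k
    by (simp add: sum_nonneg_eq_0_iff)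
  then have "w $ k * nu $ k * y $ k = 0" for k
    using support by (cases "v $ k = 0") auto
  then have "weight_mat nu w *v y = 0"
    by (simp add: weight_mat_mult_vec vec_eq_iff)
  then have "(transpose X ** weight_mat nu w ** X) *v x = 0"
    by (simp add: weighted_gram_mult_vec y_def)
  with \<open>x \<noteq> 0\<close> nonzero show False
    unfolding fdet_def det_nonzero_iff_trivial_kernel by blast
qed

lemma continuous_on_fdet [continuous_intros]:
  "continuous_on S f \<Longrightarrow> continuous_on S (\<lambda>x. fdet X nu (f x))"
  unfolding fdet_def det_def
  by (simp add: matrix_matrix_mult_def weight_mat_def transpose_def if_distrib cong: if_cong
      | intro continuous_intros)+

lemma fdet_nonzero_on_segment_to_positive:
  assumes nu: "\<forall>i. 0 \<le> nu $ i" and w: "\<forall>i. 0 \<le> w $ i" and w0: "\<forall>i. 0 < w0 $ i"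
    and nonzero: "fdet X nu w \<noteq> 0" and t: "0 \<le> t" "t \<le> 1"
  shows "fdet X nu ((1 - t) *\<^sub>R w + t *\<^sub>R w0) \<noteq> 0"
proof (cases "t = 0")
  case True
  with nonzero show ?thesis
    by simp
next
  case False
  have positive: "0 < ((1 - t) *\<^sub>R w + t *\<^sub>R w0) $ i" for i
  proof -
    have "0 \<le> (1 - t) * w $ i"
      using t w by (intro mult_nonneg_nonneg) auto
    moreover have "0 < t * w0 $ i"
      using t False w0 by (intro mult_pos_pos) auto
    ultimately show ?thesis
      by simp
  qed
  then show ?thesis
    using fdet_nonzero_if_support_subset[OF nu _ _ nonzero]
    by (metis less_imp_le less_irrefl)
qed

theorem lemma5:
  fixes X :: "real ^ 'p ^ 'm" and nu :: "real ^ 'm" and w0 :: "real ^ 'm"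
  assumes "CARD('m) \<ge> 2" and "CARD('p) \<ge> 2"
    and "\<forall>i. 0 \<le> nu $ i"
    and "\<exists>w \<in> prob_simplex. fdet X nu w > 0"
    and "w0 \<in> prob_simplex" and "\<forall>i. 0 < w0 $ i \<and> w0 $ i < 1"
  shows "fdet X nu w0 > 0"
proof (rule ccontr)
  assume "\<not> fdet X nu w0 > 0"
  obtain w where "w \<in> prob_simplex" and "fdet X nu w > 0"
    using assms(4) by blast
  define g where "g t = fdet X nu ((1 - t) *\<^sub>R w + t *\<^sub>R w0)" for t
  have "continuous_on {0..1} g"
    unfolding g_def by (intro continuous_intros)
  moreover have "g 1 \<le> 0" "0 \<le> g 0"
    using \<open>\<not> fdet X nu w0 > 0\<close> \<open>fdet X nu w > 0\<close> by (simp_all add: g_def)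
  ultimately obtain t where t: "0 \<le> t" "t \<le> 1" and "g t = 0"
    using IVT2'[of g 1 0 0] by auto
  have "\<forall>i. 0 \<le> w $ i"
    using \<open>w \<in> prob_simplex\<close> by (simp add: prob_simplex_def)
  then have "g t \<noteq> 0"
    unfolding g_def using assms(3,6) \<open>fdet X nu w > 0\<close> t
    by (intro fdet_nonzero_on_segment_to_positive) auto
  with \<open>g t = 0\<close> show False
    by contradiction
qed

end
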